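(* Let $\mathscr{C}=\{(\boldsymbol{u}(i),\mathcal{D}_i)\}_{i=1}^M$ be an $(n,M,\mathcal{X},\epsilon,B,\delta)$-code for the complex AWGN channel with noise variance $\sigma^2$ belonging to the family $\mathsf{C}(C,\boldsymbol{A},\boldsymbol{L},\boldsymbol{\alpha},\boldsymbol{p},\boldsymbol{r})$ described below. Then the radii $r_1,\dots,r_C$ satisfy \[ \epsilon\ge 1-\frac1M\sum_{i=1}^M\prod_{c=1}^C\left(1-\exp\!\left(-\frac{r_c^2}{\sigma^2}\right)\right)^{n\sum_{\ell=1}^{L_c}P_{\boldsymbol{u}(i)}(x_c^{(\ell)})}. \]
   Context: Channel: $f_{\boldsymbol{Y}|\boldsymbol{X}}(\boldsymbol{y}|\boldsymbol{\nu})=\prod_{m=1}^n \frac{1}{\pi\sigma^2}\exp(-|y_m-\nu_m|^2/\sigma^2)$. An $(n,M,\mathcal{X})$-code is $\{(\boldsymbol{u}(i),\mathcal{D}_i)\}_{i=1}^M$ with $\boldsymbol{u}(i)\in\mathcal{X}^n$ and pairwise disjoint $\mathcal{D}_i\subseteq\mathbb{C}^n$; $\gamma(\mathscr{C})=\frac1M\sum_i\big(1-\int_{\mathcal{D}_i}f_{\boldsymbol{Y}|\boldsymbol{X}}(\boldsymbol{y}|\boldsymbol{u}(i))\mathrm{d}\boldsymbol{y}\big)$; $e_i=k_1\sum_m|u_m(i)|^2+k_2\sum_m|u_m(i)|^4$ with positive constants $k_1,k_2$; $\theta(\mathscr{C},B)=\frac1M\sum_i\mathbb{1}_{\{e_i<B\}}$;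 an $(n,M,\mathcal{X},\epsilon,B,\delta)$-code is one with $\gamma(\mathscr{C})\le\epsilon$, $\theta(\mathscr{C},B)\le\delta$. Types: $P_{\boldsymbol{u}(i)}(x)=\frac1n\sum_m\mathbb{1}_{\{u_m(i)=x\}}$, $P_{\mathscr{C}}=\frac1M\sum_iP_{\boldsymbol{u}(i)}$. Family $\mathsf{C}(C,\boldsymbol{A},\boldsymbol{L},\boldsymbol{\alpha},\boldsymbol{p},\boldsymbol{r})$: amplitudes $A_1>\dots>A_C>0$; $L_c\in\mathbb{N}$; phases $\alpha_c$; layer $c$ is $\{x_c^{(1)},\dots,x_c^{(L_c)}\}=\{A_c\exp(\mathrm{i}(2\pi\ell/L_c+\alpha_c)):\ell=0,\dots,L_c-1\}$; $\mathcal{X}$ is the union of the layers. Codewords are pairwise distinct with $P_{\mathscr{C}}(x_c^{(\ell)})=p_c/L_c$ for a probability vector $\boldsymbol{p}$. With radii $r_c>0$ and discs $\mathcal{G}_c^{(\ell)}=\{y\in\mathbb{C}:|y-x_c^{(\ell)}|\le r_c\}$, $\mathcal{D}_i=\prod_{m=1}^n\mathcal{D}_{i,m}$ where $\mathcal{D}_{i,m}=\mathcal{G}_c^{(\ell)}$ if $u_m(i)=x_c^{(\ell)}$; and $A_c-A_{c+1}\ge r_c+r_{c+1}$ for $c<C$. *)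

theory Defs
  imports "HOL-Analysis.Analysis"
begin

text \<open>Indices are 0-based: codewords i < M, positions m < n, layers c < C,
  points l < L c. Codewords are maps u i :: nat => complex (values at m < n matter).\<close>

definition awgn_density :: "real \<Rightarrow> nat \<Rightarrow> (nat \<Rightarrow> complex) \<Rightarrow> (nat \<Rightarrow> complex) \<Rightarrow> real" where
  "awgn_density \<sigma> n \<nu> y =
     (\<Prod>m<n. 1 / (pi * \<sigma>\<^sup>2) * exp (- (cmod (y m - \<nu> m))\<^sup>2 / \<sigma>\<^sup>2))"

abbreviation cn_lebesgue :: "nat \<Rightarrow> (nat \<Rightarrow> complex) measure" where
  "cn_lebesgue n \<equiv> PiM {..<n} (\<lambda>_. lborel)"

definition avg_error :: "real \<Rightarrow> nat \<Rightarrow> nat \<Rightarrow> (nat \<Rightarrow> nat \<Rightarrow> complex)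
    \<Rightarrow> (nat \<Rightarrow> (nat \<Rightarrow> complex) set) \<Rightarrow> real" where
  "avg_error \<sigma> n M u D =
     (1 / real M) * (\<Sum>i<M. 1 - (LINT y:D i|cn_lebesgue n. awgn_density \<sigma> n (u i) y))"

definition energy :: "real \<Rightarrow> real \<Rightarrow> nat \<Rightarrow> (nat \<Rightarrow> complex) \<Rightarrow> real" where
  "energy k1 k2 n v = k1 * (\<Sum>m<n. (cmod (v m))^2) + k2 * (\<Sum>m<n. (cmod (v m))^4)"

definition energy_outage :: "real \<Rightarrow> real \<Rightarrow> nat \<Rightarrow> nat \<Rightarrow> (nat \<Rightarrow> nat \<Rightarrow> complex) \<Rightarrow> real \<Rightarrow> real" where
  "energy_outage k1 k2 n M u B = (1 / real M) * real (card {i. i < M \<and> energy k1 k2 n (u i) < B})"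

definition word_type :: "nat \<Rightarrow> (nat \<Rightarrow> complex) \<Rightarrow> complex \<Rightarrow> real" where
  "word_type n v x = (1 / real n) * real (card {m. m < n \<and> v m = x})"

definition code_type :: "nat \<Rightarrow> nat \<Rightarrow> (nat \<Rightarrow> nat \<Rightarrow> complex) \<Rightarrow> complex \<Rightarrow> real" where
  "code_type n M u x = (1 / real M) * (\<Sum>i<M. word_type n (u i) x)"

definition cpoint :: "(nat \<Rightarrow> real) \<Rightarrow> (nat \<Rightarrow> nat) \<Rightarrow> (nat \<Rightarrow> real) \<Rightarrow> nat \<Rightarrow> nat \<Rightarrow> complex" where
  "cpoint A L \<alpha> c l = complex_of_real (A c) * cis (2 * pi * real l / real (L c) + \<alpha> c)"

definition constellation :: "nat \<Rightarrow> (nat \<Rightarrow> real) \<Rightarrow> (nat \<Rightarrow> nat) \<Rightarrow> (nat \<Rightarrow> real) \<Rightarrow> complex set" where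
  "constellation C A L \<alpha> = {cpoint A L \<alpha> c l | c l. c < C \<and> l < L c}"

definition decoding_region :: "nat \<Rightarrow> nat \<Rightarrow> (nat \<Rightarrow> real) \<Rightarrow> (nat \<Rightarrow> nat) \<Rightarrow> (nat \<Rightarrow> real)
    \<Rightarrow> (nat \<Rightarrow> real) \<Rightarrow> (nat \<Rightarrow> complex) \<Rightarrow> (nat \<Rightarrow> complex) set" where
  "decoding_region n C A L \<alpha> r v =
     PiE {..<n} (\<lambda>m. \<Union>{cball (cpoint A L \<alpha> c l) (r c) | c l. c < C \<and> l < L c \<and> v m = cpoint A L \<alpha> c l})"

end

(*
  The decoding region of a codeword is a product of discs centred at its symbols and the
  noise density is a product over positions, so by Tonelli the probability of correct
  decoding factors into Gaussian masses of discs; a disc of radius r_c carries mass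
  1 - exp (-r_c^2 / sigma^2), computed as a layer-cake integral. Grouping the positions by
  layer yields the exponent n * sum_l P_u(x_c^(l)).
*)
theory Submission
  imports Defs
begin

lemma nn_integral_exp_minus_interval:
  fixes t a :: real
  shows "(\<integral>\<^sup>+s\<in>{t..a}. ennreal (exp (- s)) \<partial>lborel) = ennreal (exp (- t) - exp (- a))"
proof (cases "t \<le> a")
  case True
  have "((\<lambda>s. exp (- s)) has_integral (- exp (- a)) - (- exp (- t))) {t..a}"
    by (rule fundamental_theorem_of_calculus[OF True])
       (auto intro!: derivative_eq_intros simp: has_real_derivative_iff_has_vector_derivative[symmetric])
  then show ?thesis
    by (subst nn_integral_has_integral_lebesgue'[of _ _ "exp (- t) - exp (- a)"]) auto
next
  case False
  then show ?thesis by (simp add: ennreal_neg)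
qed

lemma nn_integral_times_exp_minus:
  fixes a :: real
  assumes "0 \<le> a"
  shows "(\<integral>\<^sup>+s\<in>{0..a}. ennreal (s * exp (- s)) \<partial>lborel) = ennreal (1 - (a + 1) * exp (- a))"
proof -
  have "((\<lambda>s. s * exp (- s)) has_integral (- (a + 1) * exp (- a)) - (- (0 + 1) * exp (- 0))) {0..a}"
    by (rule fundamental_theorem_of_calculus[OF assms])
       (auto intro!: derivative_eq_intros simp: has_real_derivative_iff_has_vector_derivative[symmetric] algebra_simps)
  then show ?thesis
    by (subst nn_integral_has_integral_lebesgue'[of _ _ "1 - (a + 1) * exp (- a)"]) (auto simp: algebra_simps)
qed

lemma (in sigma_finite_measure) nn_integral_exp_minus_sublevel:
  assumes [measurable]: "t \<in> borel_measurable M"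
  shows "(\<integral>\<^sup>+y\<in>{y \<in> space M. t y \<le> a}. ennreal (exp (- t y)) \<partial>M)
      = ennreal (exp (- a)) * emeasure M {y \<in> space M. t y \<le> a}
        + (\<integral>\<^sup>+s\<in>{..a}. ennreal (exp (- s)) * emeasure M {y \<in> space M. t y \<le> s} \<partial>lborel)"
proof -
  define f where "f y s = ennreal (exp (- s)) * indicator {t y..a} s" for y s
  interpret pair_sigma_finite M lborel
    by (simp add: pair_sigma_finite_def sigma_finite_measure_axioms lborel.sigma_finite_measure_axioms)
  have f_measurable: "case_prod f \<in> borel_measurable (M \<Otimes>\<^sub>M lborel)"
    unfolding f_def indicator_def atLeastAtMost_iff by measurable
  \<comment> \<open>Layer cake: for t y \<le> a, exp (- t y) = exp (- a) + the integral of exp (- s) over [t y, a].\<close>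
  have layer_cake: "ennreal (exp (- t y)) * indicator {y \<in> space M. t y \<le> a} y
      = ennreal (exp (- a)) * indicator {y \<in> space M. t y \<le> a} y + (\<integral>\<^sup>+s. f y s \<partial>lborel)"
    if "y \<in> space M" for y
    using that
    by (cases "t y \<le> a") (simp_all add: f_def nn_integral_exp_minus_interval ennreal_plus[symmetric] ennreal_neg)
  have inner: "(\<integral>\<^sup>+y. f y s \<partial>M) = ennreal (exp (- s)) * indicator {..a} s * emeasure M {y \<in> space M. t y \<le> s}"
    for s
  proof -
    have "(\<integral>\<^sup>+y. f y s \<partial>M) = (\<integral>\<^sup>+y. (ennreal (exp (- s)) * indicator {..a} s) * indicator {y \<in> space M. t y \<le> s} y \<partial>M)"
      by (rule nn_integral_cong) (auto simp: f_def indicator_def)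
    then show ?thesis
      by (simp add: nn_integral_cmult_indicator)
  qed
  have "(\<integral>\<^sup>+y\<in>{y \<in> space M. t y \<le> a}. ennreal (exp (- t y)) \<partial>M)
      = ennreal (exp (- a)) * emeasure M {y \<in> space M. t y \<le> a} + (\<integral>\<^sup>+y. (\<integral>\<^sup>+s. f y s \<partial>lborel) \<partial>M)"
    using lborel.borel_measurable_nn_integral[OF f_measurable]
    by (simp add: layer_cake nn_integral_add nn_integral_cmult_indicator cong: nn_integral_cong)
  also have "(\<integral>\<^sup>+y. (\<integral>\<^sup>+s. f y s \<partial>lborel) \<partial>M) = (\<integral>\<^sup>+s. (\<integral>\<^sup>+y. f y s \<partial>M) \<partial>lborel)"
    by (rule Fubini'[OF f_measurable, symmetric])
  finally show ?thesis
    by (simp add: inner mult_ac)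
qed

lemma emeasure_lborel_cball_complex:
  fixes x :: complex
  assumes "0 \<le> \<rho>"
  shows "emeasure lborel (cball x \<rho>) = ennreal (pi * \<rho>\<^sup>2)"
  using assms by (simp add: emeasure_cball unit_ball_vol_2 mult.commute)

lemma sq_dist_sublevel_eq_cball:
  fixes x :: complex
  assumes "0 < q" "0 \<le> s"
  shows "{y. (cmod (y - x))\<^sup>2 / q \<le> s} = cball x (sqrt (q * s))"
  using assms by (auto simp: dist_norm norm_minus_commute divide_le_eq mult.commute real_le_rsqrt
      intro: real_sqrt_le_iff[THEN iffD1])

lemma emeasure_lborel_sq_dist_sublevel:
  fixes x :: complex
  assumes "0 < q"
  shows "emeasure lborel {y. (cmod (y - x))\<^sup>2 / q \<le> s} = ennreal (pi * q * s)"
proof (cases "0 \<le> s")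
  case True
  then show ?thesis
    using assms by (simp add: sq_dist_sublevel_eq_cball emeasure_lborel_cball_complex)
next
  case False
  then have "{y. (cmod (y - x))\<^sup>2 / q \<le> s} = {}"
    using assms by (auto simp: not_le intro: less_le_trans)
  then show ?thesis
    using False assms by (simp add: ennreal_neg mult_nonneg_nonpos)
qed

lemma nn_integral_gaussian_cball:
  fixes x :: complex
  assumes q: "0 < q" and rho: "0 \<le> \<rho>"
  shows "(\<integral>\<^sup>+y\<in>cball x \<rho>. ennreal (exp (- (cmod (y - x))\<^sup>2 / q)) \<partial>lborel)
           = ennreal (pi * q * (1 - exp (- \<rho>\<^sup>2 / q)))"
proof -
  define a where "a = \<rho>\<^sup>2 / q"
  define t where "t y = (cmod (y - x))\<^sup>2 / q" for y
  have a: "0 \<le> a" using q by (simp add: a_def)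
  have sublevel: "emeasure lborel {y \<in> space lborel. t y \<le> s} = ennreal (pi * q * s)" for s
    using emeasure_lborel_sq_dist_sublevel[OF q] by (simp add: t_def)
  have t_measurable: "t \<in> borel_measurable lborel"
    unfolding t_def by measurable
  have "cball x \<rho> = {y \<in> space lborel. t y \<le> a}"
    using q rho by (simp add: t_def a_def sq_dist_sublevel_eq_cball)
  then have "(\<integral>\<^sup>+y\<in>cball x \<rho>. ennreal (exp (- (cmod (y - x))\<^sup>2 / q)) \<partial>lborel)
      = (\<integral>\<^sup>+y\<in>{y \<in> space lborel. t y \<le> a}. ennreal (exp (- t y)) \<partial>lborel)"
    by (simp add: t_def)
  also have "\<dots> = ennreal (exp (- a)) * ennreal (pi * q * a)
        + (\<integral>\<^sup>+s\<in>{..a}. ennreal (exp (- s)) * ennreal (pi * q * s) \<partial>lborel)"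
    unfolding lborel.nn_integral_exp_minus_sublevel[OF t_measurable] sublevel ..
  also have "(\<integral>\<^sup>+s\<in>{..a}. ennreal (exp (- s)) * ennreal (pi * q * s) \<partial>lborel)
      = ennreal (pi * q) * (\<integral>\<^sup>+s\<in>{0..a}. ennreal (s * exp (- s)) \<partial>lborel)"
    using q by (subst nn_integral_cmult[symmetric])
      (auto intro!: nn_integral_cong simp: ennreal_mult'[symmetric] ennreal_neg mult_nonpos_nonneg mult_ac indicator_def)
  also have "\<dots> = ennreal (pi * q * (1 - (a + 1) * exp (- a)))"
    using q by (simp add: nn_integral_times_exp_minus[OF a] ennreal_mult')
  also have "ennreal (exp (- a)) * ennreal (pi * q * a) + \<dots>
      = ennreal (exp (- a) * (pi * q * a) + pi * q * (1 - (a + 1) * exp (- a)))"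
  proof -
    have "(a + 1) * exp (- a) \<le> 1"
      using exp_ge_add_one_self[of a] by (simp add: exp_minus field_simps)
    then show ?thesis
      using q a by (simp add: ennreal_mult[symmetric] ennreal_plus)
  qed
  also have "exp (- a) * (pi * q * a) + pi * q * (1 - (a + 1) * exp (- a)) = pi * q * (1 - exp (- a))"
    by (simp add: algebra_simps)
  finally show ?thesis
    by (simp add: a_def)
qed

lemma nn_integral_gaussian_density_cball:
  fixes x :: complex
  assumes \<sigma>: "0 < \<sigma>" and \<rho>: "0 \<le> \<rho>"
  shows "(\<integral>\<^sup>+z. ennreal (1 / (pi * \<sigma>\<^sup>2) * exp (- (cmod (z - x))\<^sup>2 / \<sigma>\<^sup>2) * indicator (cball x \<rho>) z) \<partial>lborel)
      = ennreal (1 - exp (- \<rho>\<^sup>2 / \<sigma>\<^sup>2))"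
proof -
  define c where "c = 1 / (pi * \<sigma>\<^sup>2)"
  have c: "0 < c" using \<sigma> by (simp add: c_def)
  have "(\<integral>\<^sup>+z. ennreal (c * exp (- (cmod (z - x))\<^sup>2 / \<sigma>\<^sup>2) * indicator (cball x \<rho>) z) \<partial>lborel)
      = ennreal c * (\<integral>\<^sup>+z\<in>cball x \<rho>. ennreal (exp (- (cmod (z - x))\<^sup>2 / \<sigma>\<^sup>2)) \<partial>lborel)"
    using c by (subst nn_integral_cmult[symmetric])
      (auto intro!: nn_integral_cong simp: ennreal_mult' indicator_def borel_closed)
  also have "\<dots> = ennreal (c * (pi * \<sigma>\<^sup>2 * (1 - exp (- \<rho>\<^sup>2 / \<sigma>\<^sup>2))))"
    using \<sigma> \<rho> c by (subst nn_integral_gaussian_cball) (simp_all add: ennreal_mult')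
  finally show ?thesis
    using \<sigma> by (simp add: c_def)
qed

lemma indicator_PiE_eq_prod:
  assumes "finite I" "y \<in> extensional I"
  shows "indicator (PiE I B) y = (\<Prod>m\<in>I. indicator (B m) (y m) :: 'a :: comm_semiring_1)"
  using assms by (auto simp: indicator_def PiE_iff prod_zero)

lemma set_integral_awgn_density_PiE_cball:
  fixes \<nu> :: "nat \<Rightarrow> complex" and \<rho> :: "nat \<Rightarrow> real"
  assumes \<sigma>: "0 < \<sigma>" and \<rho>: "\<And>m. m < n \<Longrightarrow> 0 \<le> \<rho> m"
  shows "(LINT y:PiE {..<n} (\<lambda>m. cball (\<nu> m) (\<rho> m))|cn_lebesgue n. awgn_density \<sigma> n \<nu> y)
           = (\<Prod>m<n. 1 - exp (- (\<rho> m)\<^sup>2 / \<sigma>\<^sup>2))"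
proof -
  define S where "S = PiE {..<n} (\<lambda>m. cball (\<nu> m) (\<rho> m))"
  define g where "g m z = 1 / (pi * \<sigma>\<^sup>2) * exp (- (cmod (z - \<nu> m))\<^sup>2 / \<sigma>\<^sup>2)
      * indicator (cball (\<nu> m) (\<rho> m)) z" for m z
  have g_nonneg: "0 \<le> g m z" for m z
    by (simp add: g_def)
  have [measurable]: "cball (\<nu> m) (\<rho> m) \<in> sets borel" for m
    by (simp add: borel_closed)
  have "(\<integral>\<^sup>+y. ennreal (indicator S y * awgn_density \<sigma> n \<nu> y) \<partial>cn_lebesgue n)
      = (\<integral>\<^sup>+y. (\<Prod>m<n. ennreal (g m (y m))) \<partial>cn_lebesgue n)"
  proof (rule nn_integral_cong)
    fix y assume "y \<in> space (cn_lebesgue n)"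
    then have "indicator S y = (\<Prod>m<n. indicator (cball (\<nu> m) (\<rho> m)) (y m) :: real)"
      unfolding S_def by (intro indicator_PiE_eq_prod) (auto simp: space_PiM PiE_iff)
    then show "ennreal (indicator S y * awgn_density \<sigma> n \<nu> y) = (\<Prod>m<n. ennreal (g m (y m)))"
      by (simp add: prod_ennreal g_nonneg g_def awgn_density_def prod.distrib[symmetric] mult_ac)
  qed
  also have "\<dots> = (\<Prod>m<n. \<integral>\<^sup>+z. ennreal (g m z) \<partial>lborel)"
    by (rule product_sigma_finite.product_nn_integral_prod)
       (auto simp: product_sigma_finite_def g_def lborel.sigma_finite_measure_axioms)
  also have "\<dots> = (\<Prod>m<n. ennreal (1 - exp (- (\<rho> m)\<^sup>2 / \<sigma>\<^sup>2)))"
    unfolding g_def using \<sigma> \<rho> by (intro prod.cong refl nn_integral_gaussian_density_cball) auto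
  also have "\<dots> = ennreal (\<Prod>m<n. 1 - exp (- (\<rho> m)\<^sup>2 / \<sigma>\<^sup>2))"
    by (rule prod_ennreal) simp
  finally show ?thesis
    unfolding S_def[symmetric] set_lebesgue_integral_def
    by (subst integral_eq_nn_integral)
       (auto simp: S_def awgn_density_def prod_nonneg intro!: sets_PiM_I_finite)
qed

lemma inj_on_cis_fraction:
  "inj_on (\<lambda>l. cis (2 * pi * real l / real N + \<alpha>)) {..<N}"
proof (rule inj_onI)
  fix l l' assume l: "l \<in> {..<N}" and l': "l' \<in> {..<N}"
    and eq: "cis (2 * pi * real l / real N + \<alpha>) = cis (2 * pi * real l' / real N + \<alpha>)"
  from eq obtain k :: int where "2 * pi * real l / real N + \<alpha> = 2 * pi * real l' / real N + \<alpha> + 2 * pi * k"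
    using sin_cos_eq_iff by (metis cis.sel complex_eq_iff)
  then have "2 * pi * real l = 2 * pi * (real l' + k * real N)"
    using l by (simp add: field_simps)
  then have "real l = real l' + k * real N"
    by simp
  then have "real_of_int (int l) = real_of_int (int l' + k * int N)"
    by simp
  then have k: "int l = int l' + k * int N"
    by (simp only: of_int_eq_iff)
  have bound: "\<bar>k * int N\<bar> < int N"
    using k l l' by simp
  have "k = 0"
  proof (rule ccontr)
    assume "k \<noteq> 0"
    then have "1 * int N \<le> \<bar>k\<bar> * int N" by (intro mult_right_mono) auto
    with bound show False by (simp add: abs_mult)
  qed
  then show "l = l'" using k by simp
qed

lemma inj_on_lessThan_if_Suc_less:
  fixes A :: "nat \<Rightarrow> 'a :: linorder"
  assumes "\<And>c. Suc c < C \<Longrightarrow> A (Suc c) < A c"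
  shows "inj_on A {..<C}"
proof -
  have "A c' < A c" if "c < c'" "c' < C" for c c'
    using that by (induction c') (auto simp: less_Suc_eq intro: assms order.strict_trans)
  then show ?thesis
    by (intro inj_onI) (metis lessThan_iff linorder_neqE_nat order_less_irrefl)
qed

lemma cmod_cpoint:
  "0 \<le> A c \<Longrightarrow> cmod (cpoint A L \<alpha> c l) = A c"
  by (simp add: cpoint_def norm_mult)

lemma cpoint_eq_cpoint_iff:
  assumes A_inj: "inj_on A {..<C}" and A_pos: "\<And>c. c < C \<Longrightarrow> 0 < A c"
    and "c < C" "c' < C" "l < L c" "l' < L c'"
  shows "cpoint A L \<alpha> c l = cpoint A L \<alpha> c' l' \<longleftrightarrow> c = c' \<and> l = l'"
proof
  assume eq: "cpoint A L \<alpha> c l = cpoint A L \<alpha> c' l'"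
  then have "A c = A c'"
    using cmod_cpoint A_pos assms(3,4) by (metis less_imp_le)
  then have "c = c'"
    using A_inj assms(3,4) by (auto dest: inj_onD)
  moreover have "l = l'"
    using eq inj_on_cis_fraction[of "L c" "\<alpha> c"] A_pos[OF assms(3)] assms(5,6) \<open>c = c'\<close>
    by (auto simp: cpoint_def dest: inj_onD)
  ultimately show "c = c' \<and> l = l'" ..
qed simp

lemma card_preimage_eq_sum_card_fibres:
  assumes "finite S" "finite I" "inj_on x I"
  shows "card {m \<in> S. v m \<in> x ` I} = (\<Sum>l\<in>I. card {m \<in> S. v m = x l})"
proof -
  have "card {m \<in> S. v m \<in> x ` I} = card (\<Union>t\<in>x ` I. {m \<in> S. v m = t})"
    by (rule arg_cong[where f = card]) blast
  also have "\<dots> = (\<Sum>t\<in>x ` I. card {m \<in> S. v m = t})"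
    using assms by (intro card_UN_disjoint) auto
  also have "\<dots> = (\<Sum>l\<in>I. card {m \<in> S. v m = x l})"
    using assms(3) by (simp add: sum.reindex)
  finally show ?thesis .
qed

lemma prod_comp_eq_prod_power_card:
  assumes "finite S" "finite T" "g ` S \<subseteq> T"
  shows "(\<Prod>m\<in>S. f (g m)) = (\<Prod>t\<in>T. f t ^ card {m \<in> S. g m = t})"
proof -
  have "(\<Prod>m\<in>S. f (g m)) = (\<Prod>t\<in>T. \<Prod>m\<in>{m \<in> S. g m = t}. f (g m))"
    using assms by (rule prod.group[symmetric])
  also have "\<dots> = (\<Prod>t\<in>T. f t ^ card {m \<in> S. g m = t})"
    by (intro prod.cong refl) simp
  finally show ?thesis .
qed

lemma decoding_region_eq_PiE_cball:
  assumes layer: "\<And>m. m < n \<Longrightarrow> layer m < C"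
    and layer_iff: "\<And>m c. m < n \<Longrightarrow> c < C \<Longrightarrow> v m \<in> cpoint A L \<alpha> c ` {..<L c} \<longleftrightarrow> layer m = c"
  shows "decoding_region n C A L \<alpha> r v = PiE {..<n} (\<lambda>m. cball (v m) (r (layer m)))"
  unfolding decoding_region_def
proof (rule PiE_cong)
  fix m assume "m \<in> {..<n}"
  then have m: "m < n" by simp
  have "{cball (cpoint A L \<alpha> c l) (r c) | c l. c < C \<and> l < L c \<and> v m = cpoint A L \<alpha> c l}
      = {cball (v m) (r (layer m))}"
  proof (intro set_eqI iffI)
    fix X assume "X \<in> {cball (cpoint A L \<alpha> c l) (r c) | c l. c < C \<and> l < L c \<and> v m = cpoint A L \<alpha> c l}"
    then obtain c l where X: "X = cball (cpoint A L \<alpha> c l) (r c)" and cl: "c < C" "l < L c" "v m = cpoint A L \<alpha> c l"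
      by blast
    then have "layer m = c" using layer_iff[OF m \<open>c < C\<close>] by auto
    then show "X \<in> {cball (v m) (r (layer m))}" using X cl(3) by simp
  next
    fix X assume "X \<in> {cball (v m) (r (layer m))}"
    moreover obtain l where "l < L (layer m)" "v m = cpoint A L \<alpha> (layer m) l"
      using layer_iff[OF m layer[OF m]] by auto
    ultimately show "X \<in> {cball (cpoint A L \<alpha> c l) (r c) | c l. c < C \<and> l < L c \<and> v m = cpoint A L \<alpha> c l}"
      using layer[OF m] by auto
  qed
  then show "\<Union>{cball (cpoint A L \<alpha> c l) (r c) | c l. c < C \<and> l < L c \<and> v m = cpoint A L \<alpha> c l}
      = cball (v m) (r (layer m))"
    by simp
qed

lemma card_layer_eq_sum_word_type:
  assumes layer_iff: "\<And>m. m < n \<Longrightarrow> v m \<in> cpoint A L \<alpha> c ` {..<L c} \<longleftrightarrow> layer m = c"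
    and inj: "inj_on (cpoint A L \<alpha> c) {..<L c}"
  shows "real n * (\<Sum>l<L c. word_type n v (cpoint A L \<alpha> c l)) = card {m \<in> {..<n}. layer m = c}"
proof -
  have "card {m \<in> {..<n}. layer m = c} = card {m \<in> {..<n}. v m \<in> cpoint A L \<alpha> c ` {..<L c}}"
    using layer_iff by (intro arg_cong[where f = card]) auto
  also have "\<dots> = (\<Sum>l<L c. card {m \<in> {..<n}. v m = cpoint A L \<alpha> c l})"
    using inj by (intro card_preimage_eq_sum_card_fibres) auto
  finally show ?thesis
    by (cases "n = 0") (simp_all add: word_type_def sum_distrib_left)
qed

lemma set_integral_awgn_density_decoding_region:
  assumes \<sigma>: "0 < \<sigma>" and A_inj: "inj_on A {..<C}" and A_pos: "\<And>c. c < C \<Longrightarrow> 0 < A c"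
    and r_pos: "\<And>c. c < C \<Longrightarrow> 0 < r c"
    and v_in: "\<And>m. m < n \<Longrightarrow> v m \<in> constellation C A L \<alpha>"
  shows "(LINT y:decoding_region n C A L \<alpha> r v|cn_lebesgue n. awgn_density \<sigma> n v y)
       = (\<Prod>c<C. (1 - exp (- (r c)\<^sup>2 / \<sigma>\<^sup>2)) powr (real n * (\<Sum>l<L c. word_type n v (cpoint A L \<alpha> c l))))"
proof -
  define q where "q c = 1 - exp (- (r c)\<^sup>2 / \<sigma>\<^sup>2)" for c
  have q_pos: "0 < q c" if "c < C" for c
    using r_pos[OF that] \<sigma> by (simp add: q_def)
  have "\<forall>m\<in>{..<n}. \<exists>c. c < C \<and> v m \<in> cpoint A L \<alpha> c ` {..<L c}"
    using v_in by (fastforce simp: constellation_def)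
  then obtain layer where layer: "\<And>m. m < n \<Longrightarrow> layer m < C \<and> v m \<in> cpoint A L \<alpha> (layer m) ` {..<L (layer m)}"
    by (metis bchoice lessThan_iff)
  have layer_iff: "v m \<in> cpoint A L \<alpha> c ` {..<L c} \<longleftrightarrow> layer m = c" if "m < n" "c < C" for m c
    using layer[OF that(1)] cpoint_eq_cpoint_iff[OF A_inj A_pos] that(2) by auto
  have "(LINT y:decoding_region n C A L \<alpha> r v|cn_lebesgue n. awgn_density \<sigma> n v y) = (\<Prod>m<n. q (layer m))"
    using decoding_region_eq_PiE_cball[of n layer C v] layer layer_iff r_pos
    by (simp add: set_integral_awgn_density_PiE_cball[OF \<sigma>] q_def less_imp_le)
  also have "\<dots> = (\<Prod>c<C. q c ^ card {m \<in> {..<n}. layer m = c})"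
    using layer by (intro prod_comp_eq_prod_power_card) auto
  also have "\<dots> = (\<Prod>c<C. q c powr (real n * (\<Sum>l<L c. word_type n v (cpoint A L \<alpha> c l))))"
  proof (intro prod.cong refl)
    fix c assume "c \<in> {..<C}"
    then have "inj_on (cpoint A L \<alpha> c) {..<L c}"
      by (auto intro!: inj_onI simp: cpoint_eq_cpoint_iff[OF A_inj A_pos])
    then show "q c ^ card {m \<in> {..<n}. layer m = c} = q c powr (real n * (\<Sum>l<L c. word_type n v (cpoint A L \<alpha> c l)))"
      using \<open>c \<in> {..<C}\<close> layer_iff q_pos by (simp add: card_layer_eq_sum_word_type powr_realpow)
  qed
  finally show ?thesis by (simp add: q_def)
qed

theorem lemma4:
  fixes n M C :: nat and \<sigma> \<epsilon> B \<delta> k1 k2 :: real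
    and A \<alpha> p r :: "nat \<Rightarrow> real" and L :: "nat \<Rightarrow> nat"
    and u :: "nat \<Rightarrow> nat \<Rightarrow> complex" and D :: "nat \<Rightarrow> (nat \<Rightarrow> complex) set"
  assumes n_pos: "n \<ge> 1" and M_pos: "M \<ge> 1" and sigma_pos: "\<sigma> > 0"
    and k_pos: "k1 > 0" "k2 > 0"
    and C_pos: "C \<ge> 1"
    and A_pos: "\<And>c. c < C \<Longrightarrow> A c > 0"
    and A_dec: "\<And>c. c + 1 < C \<Longrightarrow> A c > A (c + 1)"
    and L_pos: "\<And>c. c < C \<Longrightarrow> L c \<ge> 1"
    and p_nonneg: "\<And>c. c < C \<Longrightarrow> p c \<ge> 0" and p_sum: "(\<Sum>c<C. p c) = 1"
    and r_pos: "\<And>c. c < C \<Longrightarrow> r c > 0"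
    and r_sep: "\<And>c. c + 1 < C \<Longrightarrow> A c - A (c + 1) \<ge> r c + r (c + 1)"
    and u_in: "\<And>i m. i < M \<Longrightarrow> m < n \<Longrightarrow> u i m \<in> constellation C A L \<alpha>"
    and u_distinct: "\<And>i j. i < M \<Longrightarrow> j < M \<Longrightarrow> i \<noteq> j \<Longrightarrow> \<exists>m<n. u i m \<noteq> u j m"
    and type_cond: "\<And>c l. c < C \<Longrightarrow> l < L c \<Longrightarrow>
                      code_type n M u (cpoint A L \<alpha> c l) = p c / real (L c)"
    and D_def: "\<And>i. i < M \<Longrightarrow> D i = decoding_region n C A L \<alpha> r (u i)"
    and D_disj: "disjoint_family_on D {..<M}"
    and err: "avg_error \<sigma> n M u D \<le> \<epsilon>"
    and outage: "energy_outage k1 k2 n M u B \<le> \<delta>"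
  shows "\<epsilon> \<ge> 1 - (1 / real M) * (\<Sum>i<M. \<Prod>c<C.
            (1 - exp (- (r c)\<^sup>2 / \<sigma>\<^sup>2)) powr
              (real n * (\<Sum>l<L c. word_type n (u i) (cpoint A L \<alpha> c l))))"
proof -
  have A_inj: "inj_on A {..<C}"
    using A_dec by (intro inj_on_lessThan_if_Suc_less) simp
  define success where "success i = (\<Prod>c<C. (1 - exp (- (r c)\<^sup>2 / \<sigma>\<^sup>2)) powr
      (real n * (\<Sum>l<L c. word_type n (u i) (cpoint A L \<alpha> c l))))" for i
  have "(LINT y:D i|cn_lebesgue n. awgn_density \<sigma> n (u i) y) = success i" if "i < M" for i
    using set_integral_awgn_density_decoding_region[OF sigma_pos A_inj A_pos r_pos u_in[OF that]]
    by (simp add: D_def[OF that] success_def)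
  then have "avg_error \<sigma> n M u D = 1 - (1 / real M) * (\<Sum>i<M. success i)"
    using M_pos by (simp add: avg_error_def sum_subtractf right_diff_distrib)
  then show ?thesis
    using err by (simp add: success_def)
qed

end
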